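(* Let $G\leq\operatorname{Homeo}(\mathfrak{C})$ be approximately full. Then $G$ is flexible if and only if $G$ is vigorous.
   Context: $\mathfrak{C}$ denotes a Cantor space (a space homeomorphic to $\{0,1\}^\omega$). Groups of homeomorphisms act on the right. $K_{\mathfrak{C}}$ denotes the set of non-empty proper clopen subsets of $\mathfrak{C}$. For $\gamma\in\operatorname{Homeo}(\mathfrak{C})$, $\operatorname{supp}(\gamma)=\{p\in\mathfrak{C}: p\gamma\neq p\}$. A subset $S\subseteq \operatorname{Homeo}(\mathfrak{C})$ is vigorous if for all clopen $A,B,C\subseteq\mathfrak{C}$ with $B,C$ non-empty proper subsets of $A$ there is $\gamma\in S$ with $\operatorname{supp}(\gamma)\subseteq A$ and $B\gamma\subseteq C$. $G$ is flexible if for all $U,V\in K_{\mathfrak{C}}$ there is $\gamma\in G$ with $U\gamma\subseteq V$. $G$ is approximately full if whenever $\Gamma\subseteq G$ is finite, $\{D_\gamma\}_{\gamma\in\Gamma}$ is a partition of $\mathfrak{C}$ into clopen sets such that $\{D_\gamma\gamma\}_{\gamma\in\Gamma}$ is also a partition of $\mathfrak{C}$, and $\delta\in\Gamma$, there exists $\chi\in G$ with $\chi|_{D_\gamma}=\gamma|_{D_\gamma}$ for every $\gamma\in\Gamma\setminus\{\delta\}$. *)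

theory Defs
  imports "HOL-Analysis.Analysis"
begin

definition cantor_top :: "(nat \<Rightarrow> bool) topology" where
  "cantor_top = product_topology (\<lambda>_. discrete_topology (UNIV :: bool set)) UNIV"

definition cantor_clopen :: "(nat \<Rightarrow> bool) set \<Rightarrow> bool" where
  "cantor_clopen A \<longleftrightarrow> openin cantor_top A \<and> closedin cantor_top A"

definition K_C :: "(nat \<Rightarrow> bool) set set" where
  "K_C = {A. cantor_clopen A \<and> A \<noteq> {} \<and> A \<noteq> topspace cantor_top}"

definition Homeo_C :: "((nat \<Rightarrow> bool) \<Rightarrow> (nat \<Rightarrow> bool)) set" where
  "Homeo_C = {f. homeomorphic_map cantor_top cantor_top f}"

definition homeo_subgroup :: "((nat \<Rightarrow> bool) \<Rightarrow> (nat \<Rightarrow> bool)) set \<Rightarrow> bool" where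
  "homeo_subgroup G \<longleftrightarrow> G \<subseteq> Homeo_C \<and> id \<in> G \<and>
     (\<forall>f\<in>G. \<forall>g\<in>G. f \<circ> g \<in> G) \<and> (\<forall>f\<in>G. inv f \<in> G)"

definition supp :: "((nat \<Rightarrow> bool) \<Rightarrow> (nat \<Rightarrow> bool)) \<Rightarrow> (nat \<Rightarrow> bool) set" where
  "supp g = {p \<in> topspace cantor_top. g p \<noteq> p}"

definition vigorous :: "((nat \<Rightarrow> bool) \<Rightarrow> (nat \<Rightarrow> bool)) set \<Rightarrow> bool" where
  "vigorous S \<longleftrightarrow> (\<forall>A B C. cantor_clopen A \<and> cantor_clopen B \<and> cantor_clopen C \<and>
      B \<noteq> {} \<and> B \<subset> A \<and> C \<noteq> {} \<and> C \<subset> A \<longrightarrow>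
      (\<exists>g\<in>S. supp g \<subseteq> A \<and> g ` B \<subseteq> C))"

definition flexible :: "((nat \<Rightarrow> bool) \<Rightarrow> (nat \<Rightarrow> bool)) set \<Rightarrow> bool" where
  "flexible G \<longleftrightarrow> (\<forall>U\<in>K_C. \<forall>V\<in>K_C. \<exists>g\<in>G. g ` U \<subseteq> V)"

definition clopen_partition :: "'i set \<Rightarrow> ('i \<Rightarrow> (nat \<Rightarrow> bool) set) \<Rightarrow> bool" where
  "clopen_partition I D \<longleftrightarrow> (\<forall>i\<in>I. cantor_clopen (D i) \<and> D i \<noteq> {}) \<and>
     (\<forall>i\<in>I. \<forall>j\<in>I. i \<noteq> j \<longrightarrow> D i \<inter> D j = {}) \<and>
     (\<Union>i\<in>I. D i) = topspace cantor_top"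

definition approximately_full :: "((nat \<Rightarrow> bool) \<Rightarrow> (nat \<Rightarrow> bool)) set \<Rightarrow> bool" where
  "approximately_full G \<longleftrightarrow> (\<forall>\<Gamma> D \<delta>. finite \<Gamma> \<and> \<Gamma> \<subseteq> G \<and>
      clopen_partition \<Gamma> D \<and> clopen_partition \<Gamma> (\<lambda>g. g ` D g) \<and> \<delta> \<in> \<Gamma> \<longrightarrow>
      (\<exists>h\<in>G. \<forall>g\<in>\<Gamma> - {\<delta>}. \<forall>p\<in>D g. h p = g p))"

end

theory Submission
  imports Defs
begin

text \<open>A vigorous set is flexible: take the ambient set to be the whole space.
  Conversely, given clopen \<open>B, T \<subseteq> A \<noteq> \<mathfrak>C\<close> disjoint, flexibility yields \<open>\<rho> \<in> G\<close> with
  \<open>\<rho>(B \<union> T) \<subseteq> T\<close>. Approximate fullness, applied to the partition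
  \<open>{\<mathfrak>C - (B \<union> \<rho>B), B, \<rho>B}\<close> with the maps \<open>id, \<rho>, \<rho>\<inverse>\<close>, cuts \<open>\<rho>\<close> down to an element
  of \<open>G\<close> agreeing with \<open>\<rho>\<close> on \<open>B\<close> and with the identity off \<open>B \<union> \<rho>B \<subseteq> A\<close>.
  To move \<open>B\<close> into an arbitrary \<open>C \<subset> A\<close> aim at \<open>C - B\<close>; if that is empty,
  go through \<open>A - B\<close> in two such moves.\<close>

lemma topspace_cantor_top [simp]: "topspace cantor_top = UNIV"
  by (simp add: cantor_top_def topspace_product_topology)

lemma cantor_clopen_UNIV: "cantor_clopen UNIV"
  unfolding cantor_clopen_def by (metis topspace_cantor_top openin_topspace closedin_topspace)

lemma cantor_clopen_Un: "cantor_clopen A \<Longrightarrow> cantor_clopen B \<Longrightarrow> cantor_clopen (A \<union> B)"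
  unfolding cantor_clopen_def by auto

lemma cantor_clopen_Diff: "cantor_clopen A \<Longrightarrow> cantor_clopen B \<Longrightarrow> cantor_clopen (A - B)"
  unfolding cantor_clopen_def by (auto intro: openin_diff closedin_diff)

lemma cantor_clopen_Compl: "cantor_clopen B \<Longrightarrow> cantor_clopen (- B)"
  using cantor_clopen_Diff[OF cantor_clopen_UNIV] by (simp add: Compl_eq_Diff_UNIV)

lemma cantor_clopen_image:
  assumes "f \<in> Homeo_C" and "cantor_clopen A"
  shows "cantor_clopen (f ` A)"
proof -
  have hm: "homeomorphic_map cantor_top cantor_top f" using assms(1) by (simp add: Homeo_C_def)
  have "A \<subseteq> topspace cantor_top" by simp
  then show ?thesis
    using assms(2) homeomorphic_map_openness[OF hm] homeomorphic_map_closedness[OF hm]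
    unfolding cantor_clopen_def by simp
qed

lemma Homeo_C_imp_bij: "f \<in> Homeo_C \<Longrightarrow> bij f"
  unfolding Homeo_C_def bij_def
  using homeomorphic_imp_injective_map homeomorphic_imp_surjective_map by fastforce

lemma supp_comp_subset: "supp (f \<circ> g) \<subseteq> supp f \<union> supp g"
  unfolding supp_def by auto

lemma clopen_partition_three:
  assumes "a \<noteq> b" "a \<noteq> c" "b \<noteq> c"
    and "cantor_clopen (F a)" "cantor_clopen (F b)" "cantor_clopen (F c)"
    and "F a \<noteq> {}" "F b \<noteq> {}" "F c \<noteq> {}"
    and "F a \<inter> F b = {}" "F a \<inter> F c = {}" "F b \<inter> F c = {}"
    and "F a \<union> F b \<union> F c = UNIV"
  shows "clopen_partition {a, b, c} F"
  using assms unfolding clopen_partition_def by (auto simp: Int_commute)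

lemma approximately_full_swap:
  assumes G: "homeo_subgroup G" and AF: "approximately_full G"
    and \<rho>G: "\<rho> \<in> G" and \<rho>_inv: "inv \<rho> \<noteq> \<rho>"
    and B: "cantor_clopen B" "B \<noteq> {}"
    and disj: "B \<inter> \<rho> ` B = {}" and proper: "B \<union> \<rho> ` B \<noteq> UNIV"
  obtains h where "h \<in> G" "\<And>p. p \<in> B \<Longrightarrow> h p = \<rho> p" "\<And>p. p \<notin> B \<union> \<rho> ` B \<Longrightarrow> h p = p"
proof -
  define \<sigma> where "\<sigma> = inv \<rho>"
  have \<rho>H: "\<rho> \<in> Homeo_C" and \<sigma>G: "\<sigma> \<in> G"
    using G \<rho>G by (auto simp: homeo_subgroup_def \<sigma>_def)
  have bij: "bij \<rho>" using Homeo_C_imp_bij[OF \<rho>H] .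
  have \<rho>_id: "\<rho> \<noteq> id" using disj B(2) by auto
  then have \<sigma>_id: "\<sigma> \<noteq> id" using bij by (metis \<sigma>_def inv_id inv_inv_eq)
  have \<rho>_\<sigma>: "\<rho> \<noteq> \<sigma>" using \<rho>_inv by (simp add: \<sigma>_def)
  have \<sigma>\<rho>B: "\<sigma> ` \<rho> ` B = B"
    using bij by (simp add: \<sigma>_def image_image bij_is_inj)
  define D where "D g = (if g = id then - (B \<union> \<rho> ` B) else if g = \<rho> then B else \<rho> ` B)" for g
  have D: "D id = - (B \<union> \<rho> ` B)" "D \<rho> = B" "D \<sigma> = \<rho> ` B"
    using \<rho>_id \<sigma>_id \<rho>_\<sigma> by (auto simp: D_def)
  have clopen: "cantor_clopen (- (B \<union> \<rho> ` B))" "cantor_clopen (\<rho> ` B)"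
    using B cantor_clopen_image[OF \<rho>H] cantor_clopen_Un cantor_clopen_Compl by blast+
  \<comment> \<open>The partition is indexed by the maps themselves, so \<open>id\<close>, \<open>\<rho>\<close>, \<open>\<rho>\<inverse>\<close> must be distinct;
    this is why involutions \<open>\<rho>\<close> are excluded.\<close>
  let ?\<Gamma> = "{id, \<rho>, \<sigma>}"
  have "clopen_partition ?\<Gamma> D"
    using \<rho>_id \<sigma>_id \<rho>_\<sigma> clopen B disj proper
    by (intro clopen_partition_three) (simp_all add: D, blast+)
  moreover have "clopen_partition ?\<Gamma> (\<lambda>g. g ` D g)"
    using \<rho>_id \<sigma>_id \<rho>_\<sigma> clopen B disj proper
    by (intro clopen_partition_three) (simp_all add: D \<sigma>\<rho>B, blast+)
  moreover have "?\<Gamma> \<subseteq> G" using G \<rho>G \<sigma>G by (auto simp: homeo_subgroup_def)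
  ultimately obtain h where "h \<in> G" and h: "\<forall>g\<in>?\<Gamma> - {\<sigma>}. \<forall>p\<in>D g. h p = g p"
    using AF[unfolded approximately_full_def, rule_format, of ?\<Gamma> D \<sigma>] by auto
  show thesis
  proof (rule that)
    show "h \<in> G" by fact
    show "h p = \<rho> p" if "p \<in> B" for p
      using h[rule_format, of \<rho> p] \<rho>_\<sigma> that D(2) by simp
    show "h p = p" if "p \<notin> B \<union> \<rho> ` B" for p
      using h[rule_format, of id p] \<sigma>_id that D(1) by simp
  qed
qed

lemma flexible_move_into_disjoint:
  assumes G: "homeo_subgroup G" and AF: "approximately_full G" and FL: "flexible G"
    and A: "A \<noteq> UNIV"
    and B: "cantor_clopen B" "B \<noteq> {}" "B \<subseteq> A"
    and T: "cantor_clopen T" "T \<noteq> {}" "T \<subseteq> A"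
    and disj: "B \<inter> T = {}"
  shows "\<exists>h\<in>G. supp h \<subseteq> A \<and> h ` B \<subseteq> T"
proof -
  have "B \<union> T \<in> K_C" "T \<in> K_C"
    using A B T cantor_clopen_Un by (auto simp: K_C_def)
  then obtain \<rho> where \<rho>G: "\<rho> \<in> G" and \<rho>BT: "\<rho> ` (B \<union> T) \<subseteq> T"
    using FL unfolding flexible_def by blast
  obtain b where b: "b \<in> B" using B by blast
  have \<rho>_inv: "inv \<rho> \<noteq> \<rho>"
  proof
    assume inv: "inv \<rho> = \<rho>"
    have "bij \<rho>"
      using G \<rho>G Homeo_C_imp_bij by (auto simp: homeo_subgroup_def)
    then have "\<rho> (\<rho> b) = b"
      using inv_f_f[of \<rho> b] inv by (simp add: bij_is_inj)
    moreover have "\<rho> (\<rho> b) \<in> T"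
      using \<rho>BT b by (simp add: image_subset_iff)
    ultimately show False
      using b disj by (metis disjoint_iff)
  qed
  have \<rho>B: "\<rho> ` B \<subseteq> T" using \<rho>BT by blast
  have BA: "B \<union> \<rho> ` B \<subseteq> A" using \<rho>B B(3) T(3) by blast
  have "B \<inter> \<rho> ` B = {}" using \<rho>B disj by blast
  moreover have "B \<union> \<rho> ` B \<noteq> UNIV" using BA A by blast
  ultimately obtain h where "h \<in> G" and h_B: "\<And>p. p \<in> B \<Longrightarrow> h p = \<rho> p"
    and h_fix: "\<And>p. p \<notin> B \<union> \<rho> ` B \<Longrightarrow> h p = p"
    using approximately_full_swap[OF G AF \<rho>G \<rho>_inv B(1,2)] by blast
  moreover have "supp h \<subseteq> A"
    using h_fix BA unfolding supp_def by blast
  moreover have "h ` B \<subseteq> T" using h_B \<rho>B by auto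
  ultimately show ?thesis by blast
qed

lemma vigorous_imp_flexible:
  assumes "vigorous G"
  shows "flexible G"
  unfolding flexible_def
proof (intro ballI)
  fix U V assume "U \<in> K_C" "V \<in> K_C"
  then have U: "cantor_clopen U" "U \<noteq> {}" "U \<subset> UNIV"
    and V: "cantor_clopen V" "V \<noteq> {}" "V \<subset> UNIV"
    by (auto simp: K_C_def)
  show "\<exists>g\<in>G. g ` U \<subseteq> V"
    using assms[unfolded vigorous_def, rule_format, of UNIV U V] cantor_clopen_UNIV U V by blast
qed

lemma flexible_imp_vigorous:
  assumes G: "homeo_subgroup G" and AF: "approximately_full G" and FL: "flexible G"
  shows "vigorous G"
  unfolding vigorous_def
proof (intro allI impI, elim conjE)
  fix A B C
  assume A: "cantor_clopen A" and B: "cantor_clopen B" "B \<noteq> {}" "B \<subset> A"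
    and C: "cantor_clopen C" "C \<noteq> {}" "C \<subset> A"
  note move = flexible_move_into_disjoint[OF G AF FL]
  show "\<exists>g\<in>G. supp g \<subseteq> A \<and> g ` B \<subseteq> C"
  proof (cases "A = UNIV")
    case True
    then have "B \<in> K_C" "C \<in> K_C" using B C by (auto simp: K_C_def)
    then obtain g where "g \<in> G" "g ` B \<subseteq> C" using FL unfolding flexible_def by blast
    then show ?thesis using True by blast
  next
    case A_proper: False
    show ?thesis
    proof (cases "C - B = {}")
      case False
      have "cantor_clopen (C - B)" using B(1) C(1) by (rule cantor_clopen_Diff[rotated])
      then obtain h where "h \<in> G" "supp h \<subseteq> A" "h ` B \<subseteq> C - B"
        using move[OF A_proper B(1,2)] B(3) C(3) False by blast
      then show ?thesis by blast
    next
      case True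
      have AB: "cantor_clopen (A - B)" "A - B \<noteq> {}" "A - B \<subseteq> A"
        using A B cantor_clopen_Diff by auto
      obtain h1 where h1: "h1 \<in> G" "supp h1 \<subseteq> A" "h1 ` B \<subseteq> A - B"
        using move[OF A_proper B(1,2) _ AB] B(3) by blast
      obtain h2 where h2: "h2 \<in> G" "supp h2 \<subseteq> A" "h2 ` (A - B) \<subseteq> C"
        using move[OF A_proper AB C(1,2)] C(3) True by blast
      have "h2 \<circ> h1 \<in> G" using G h1(1) h2(1) by (auto simp: homeo_subgroup_def)
      moreover have "supp (h2 \<circ> h1) \<subseteq> A" using supp_comp_subset h1(2) h2(2) by blast
      moreover have "(h2 \<circ> h1) ` B \<subseteq> C" using h1(3) h2(3) by (auto simp: image_subset_iff)
      ultimately show ?thesis by blast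
    qed
  qed
qed

theorem lemma2p14:
  assumes "homeo_subgroup G" and "approximately_full G"
  shows "flexible G \<longleftrightarrow> vigorous G"
  using flexible_imp_vigorous[OF assms] vigorous_imp_flexible by blast

end
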